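(* Let $\mathcal{K}>0$, $\tau$ sufficiently large, $\eta\in[\tau^{-1/64},\frac12\mathcal{K}^2)$, $f_\eta$ a cutoff with cutoff parameter $\mathcal{K}$, and assume $\eta^{-1}\le\Lambda_e^{1/8}\le\tau^{1/32}$. Let $P=\mathbf{1}(h\le\Lambda_e)$. Then there is a constant $C>0$ independent of $\tau,\Lambda_e,\eta$ such that $$\left|\mathrm{Tr}_{\mathfrak{F}(P\mathfrak{H})}\big(\Gamma_{\tau,0,P}f_\eta(\mathcal{N}_P/\tau)\big)-\int_{\mathfrak{H}}f_\eta(\|Pu\|^2_{L^2})\,d\mu_0(u)\right|\le C\tau^{-1/4}.$$
   Context: $\mathbb{T}=[0,1]$ (periodic), $\mathfrak{H}=L^2(\mathbb{T};\mathbb{C})$, $h=\frac12(-\Delta+1)$ with eigenfunctions $e^{2\pi ikx}$, eigenvalues $\lambda_k=\frac12((2\pi k)^2+1)$; $P=\mathbf{1}(h\le\Lambda_e)$. $\mu_0$: centered Gaussian measure with covariance $h^{-1}$ (law of $\sum_k\lambda_k^{-1/2}g_ke^{2\pi ikx}$, $g_k$ i.i.d. standard complex Gaussians). $\mathfrak{F}(P\mathfrak{H})$ is the bosonic Fock space over the finite-dimensional space $P\mathfrak{H}$, $\mathcal{N}_P$ its number operator, $\mathbb{H}_{\tau,0,P}=\frac1\tau d\Gamma(PhP)$, and $\Gamma_{\tau,0,P}=e^{-\mathbb{H}_{\tau,0,P}}/\mathrm{Tr}\,e^{-\mathbb{H}_{\tau,0,P}}$. Cutoff: $f_\eta\in C_c^\infty([0,\infty);[0,1])$,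 $f_\eta=1$ on $[0,\mathcal{K}^2-\eta]$, $=0$ on $(\mathcal{K}^2,\infty)$, $\|f_\eta^{(j)}\|_\infty\le C_j\eta^{-j}$ ($C_j$ independent of $\eta$), $f_\eta\to\mathbf{1}_{[0,\mathcal{K}^2)}$ pointwise. *)

theory Defs
  imports "HOL-Probability.Probability"
begin

(* eigenvalues of h = (1/2)(-Delta + 1) on the torus [0,1], for e^{2 pi i k x} *)
definition lam :: "int \<Rightarrow> real" where
  "lam k = ((2 * pi * real_of_int k)^2 + 1) / 2"

(* the modes spanning P H, P = 1(h \<le> Lambda_e) *)
definition Pmodes :: "real \<Rightarrow> int set" where
  "Pmodes Le = {k. lam k \<le> Le}"

(* occupation-number configurations of the Fock space F(PH):
   the eigenbasis of both dGamma(PhP) and N_P *)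
definition occ :: "real \<Rightarrow> (int \<Rightarrow> nat) set" where
  "occ Le = {n. \<forall>k. k \<notin> Pmodes Le \<longrightarrow> n k = 0}"

(* eigenvalue of H_{tau,0,P} = (1/tau) dGamma(PhP) on configuration n *)
definition H_eig :: "real \<Rightarrow> real \<Rightarrow> (int \<Rightarrow> nat) \<Rightarrow> real" where
  "H_eig tau Le n = (\<Sum>k\<in>Pmodes Le. lam k * real (n k)) / tau"

(* eigenvalue of the number operator N_P on configuration n *)
definition N_eig :: "real \<Rightarrow> (int \<Rightarrow> nat) \<Rightarrow> real" where
  "N_eig Le n = (\<Sum>k\<in>Pmodes Le. real (n k))"

(* Tr_{F(PH)} ( Gamma_{tau,0,P} g(N_P) ), computed in the occupation basis *)
definition fock_gibbs_trace :: "real \<Rightarrow> real \<Rightarrow> (real \<Rightarrow> real) \<Rightarrow> real" where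
  "fock_gibbs_trace tau Le g =
     (\<Sum>\<^sub>\<infinity>n\<in>occ Le. exp (- H_eig tau Le n) * g (N_eig Le n))
     / (\<Sum>\<^sub>\<infinity>n\<in>occ Le. exp (- H_eig tau Le n))"

definition std_cgauss :: "complex measure" where
  "std_cgauss = density lborel (\<lambda>z. ennreal (exp (- ((cmod z)^2)) / pi))"

(* mu_0: law of the Fourier coefficient sequence (u_k)_k of
   u = sum_k lam_k^{-1/2} g_k e^{2 pi i k x}, g_k iid standard complex Gaussians *)
definition mu0 :: "(int \<Rightarrow> complex) measure" where
  "mu0 = distr (PiM UNIV (\<lambda>_. std_cgauss)) (PiM UNIV (\<lambda>_. borel))
              (\<lambda>g k. g k / complex_of_real (sqrt (lam k)))"

(* ||P u||_{L^2}^2 in terms of Fourier coefficients (Parseval) *)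
definition normP_sq :: "real \<Rightarrow> (int \<Rightarrow> complex) \<Rightarrow> real" where
  "normP_sq Le u = (\<Sum>k\<in>Pmodes Le. (cmod (u k))^2)"

(* f is a cutoff with parameter KK and cutoff parameter eta, with derivative
   bounds C j * eta^-j; D is the sequence of derivatives of f = D 0 on [0,inf) *)
definition is_cutoff ::
  "real \<Rightarrow> real \<Rightarrow> (nat \<Rightarrow> real) \<Rightarrow> (nat \<Rightarrow> real \<Rightarrow> real) \<Rightarrow> bool" where
  "is_cutoff KK eta C D \<longleftrightarrow>
     (\<forall>j. \<forall>x\<ge>0. (D j has_real_derivative D (Suc j) x) (at x within {0..})) \<and>
     (\<forall>x\<ge>0. 0 \<le> D 0 x \<and> D 0 x \<le> 1) \<and>
     (\<forall>x. 0 \<le> x \<and> x \<le> KK^2 - eta \<longrightarrow> D 0 x = 1) \<and>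
     (\<forall>x. x > KK^2 \<longrightarrow> D 0 x = 0) \<and>
     (\<forall>j. \<forall>x\<ge>0. \<bar>D j x\<bar> \<le> C j * eta powr (- real j))"

end

theory Submission
  imports Defs
begin

(*
  Under mu0 the modes u_k of P u are independent with |u_k|^2 = |g_k|^2 / lam_k, and |g_k|^2 is a
  standard exponential variable. Hence the integer parts n_k = floor (tau |u_k|^2) are independent
  geometric variables, P(n_k = m) = (1 - exp (-lam_k / tau)) exp (-m lam_k / tau): their joint law is
  exactly the Gibbs distribution of the occupation numbers under Gamma_{tau,0,P}. So the Fock-space
  trace is the mu0-expectation of f_eta (sum_k n_k / tau), and sum_k n_k / tau differs from ||P u||^2
  by at most (number of modes of P) / tau <= (2 sqrt Lambda_e + 1) / tau. As |f_eta'| <= C_1 / eta,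
  the error is O(Lambda_e^(1/2) / (eta tau)), which is O(tau^(-1/4)) under the assumed relations
  between eta, Lambda_e and tau.
*)

section \<open>The standard complex Gaussian\<close>

lemma measurable_Complex_pair:
  "(\<lambda>(x, y). Complex x y) \<in> lborel \<Otimes>\<^sub>M lborel \<rightarrow>\<^sub>M (borel :: complex measure)"
proof -
  have "(\<lambda>p. complex_of_real (fst p) + \<i> * complex_of_real (snd p))
          \<in> borel_measurable (borel :: (real \<times> real) measure)"
    by (intro borel_measurable_continuous_onI continuous_intros)
  then show ?thesis
    by (simp add: borel_prod[symmetric] lborel_prod case_prod_beta Complex_eq cong: measurable_cong_sets)
qed

lemma lborel_complex_eq_distr_pair:
  "(lborel :: complex measure) = distr (lborel \<Otimes>\<^sub>M lborel) borel (\<lambda>(x, y). Complex x y)"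
proof (rule lborel_eqI)
  fix l u :: complex
  assume le: "\<And>b. b \<in> Basis \<Longrightarrow> l \<bullet> b \<le> u \<bullet> b"
  have "Re l \<le> Re u" "Im l \<le> Im u"
    using le[of 1] le[of \<i>] by (auto simp: Basis_complex_def)
  moreover have "(\<lambda>(x, y). Complex x y) -` box l u \<inter> space (lborel \<Otimes>\<^sub>M lborel)
                   = {Re l<..<Re u} \<times> {Im l<..<Im u}"
    by (auto simp: box_def Basis_complex_def space_pair_measure)
  ultimately show "emeasure (distr (lborel \<Otimes>\<^sub>M lborel) borel (\<lambda>(x, y). Complex x y)) (box l u)
                     = (\<Prod>b\<in>Basis. (u - l) \<bullet> b)"
    by (simp add: emeasure_distr[OF measurable_Complex_pair] lborel.emeasure_pair_measure_Times
                  Basis_complex_def ennreal_mult)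
qed simp

lemma nn_integral_lborel_complex:
  fixes h :: "complex \<Rightarrow> ennreal"
  assumes [measurable]: "h \<in> borel_measurable borel"
  shows "(\<integral>\<^sup>+z. h z \<partial>lborel) = (\<integral>\<^sup>+x. \<integral>\<^sup>+y. h (Complex x y) \<partial>lborel \<partial>lborel)"
proof -
  have "(\<integral>\<^sup>+z. h z \<partial>lborel) = (\<integral>\<^sup>+p. h (case p of (x, y) \<Rightarrow> Complex x y) \<partial>(lborel \<Otimes>\<^sub>M lborel))"
    by (subst lborel_complex_eq_distr_pair) (simp add: nn_integral_distr[OF measurable_Complex_pair])
  also have "\<dots> = (\<integral>\<^sup>+x. \<integral>\<^sup>+y. h (Complex x y) \<partial>lborel \<partial>lborel)"
    by (subst lborel.nn_integral_fst[symmetric])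
       (auto intro: measurable_compose[OF measurable_Complex_pair])
  finally show ?thesis .
qed

lemma nn_integral_lborel_even:
  fixes g :: "real \<Rightarrow> ennreal"
  assumes [measurable]: "g \<in> borel_measurable borel" and even: "\<And>y. g (- y) = g y"
  shows "(\<integral>\<^sup>+y. g y \<partial>lborel) = 2 * (\<integral>\<^sup>+y. g y * indicator {0..} y \<partial>lborel)"
proof -
  have "(\<integral>\<^sup>+y. g y \<partial>lborel)
          = (\<integral>\<^sup>+y. g y * indicator {0..} y \<partial>lborel) + (\<integral>\<^sup>+y. g y * indicator {..<0} y \<partial>lborel)"
    by (subst nn_integral_add[symmetric]) (auto intro!: nn_integral_cong split: split_indicator)
  also have "(\<integral>\<^sup>+y. g y * indicator {..<0} y \<partial>lborel)
               = (\<integral>\<^sup>+y. g (0 + -1 * y) * indicator {..<0} (0 + -1 * y) \<partial>lborel)"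
    using nn_integral_real_affine[of "\<lambda>y. g y * indicator {..<0} y" "-1" 0] by simp
  also have "\<dots> = (\<integral>\<^sup>+y. g y * indicator {0..} y \<partial>lborel)"
    by (intro nn_integral_cong_AE, use AE_lborel_singleton[of 0] in eventually_elim)
       (auto simp: even split: split_indicator)
  finally show ?thesis
    by (simp add: mult_2)
qed

lemma nn_integral_x_exp_neg_sq_atLeast:
  fixes a c :: real
  assumes c: "0 < c" and a: "0 \<le> a"
  shows "(\<integral>\<^sup>+x. ennreal (x * exp (- (c * x\<^sup>2))) * indicator {a..} x \<partial>lborel)
           = ennreal (exp (- (c * a\<^sup>2)) / (2 * c))"
proof -
  have "((\<lambda>x. - exp (- (c * x\<^sup>2)) / (2 * c)) \<longlongrightarrow> - 0 / (2 * c)) at_top"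
    by (intro tendsto_divide tendsto_minus filterlim_compose[OF exp_at_bot]
          filterlim_compose[OF filterlim_uminus_at_bot_at_top] tendsto_const
          filterlim_tendsto_pos_mult_at_top filterlim_pow_at_top filterlim_ident)
       (use c in auto)
  then have "(\<integral>\<^sup>+x. ennreal (x * exp (- (c * x\<^sup>2))) * indicator {a..} x \<partial>lborel)
               = ennreal (0 - (- exp (- (c * a\<^sup>2)) / (2 * c)))"
    using a c by (intro nn_integral_FTC_atLeast) (auto intro!: derivative_eq_intros simp: field_simps)
  then show ?thesis
    by simp
qed

lemma nn_integral_gaussian_quadrant_tail:
  fixes t :: real
  assumes t: "0 \<le> t"
  shows "(\<integral>\<^sup>+x. (\<integral>\<^sup>+y. ennreal (exp (- (x\<^sup>2 + y\<^sup>2))) * indicator {t..} (x\<^sup>2 + y\<^sup>2)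
                          * indicator {0..} y \<partial>lborel) * indicator {0..} x \<partial>lborel)
           = ennreal (exp (- t) * pi / 4)"
proof -
  define k where "k x s = ennreal (x * exp (- (x\<^sup>2 * (1 + s\<^sup>2)))) * indicator {t..} (x\<^sup>2 * (1 + s\<^sup>2))
                            * indicator {0..} s * indicator {0..} x" for x s :: real
  have [measurable]: "case_prod k \<in> borel_measurable (lborel \<Otimes>\<^sub>M lborel)"
    unfolding k_def by measurable
  \<comment> \<open>the substitution \<open>y = x s\<close> turns the disc boundary \<open>x\<^sup>2 + y\<^sup>2 = t\<close> into \<open>x = sqrt (t / (1 + s\<^sup>2))\<close>\<close>
  have subst: "(\<integral>\<^sup>+y. ennreal (exp (- (x\<^sup>2 + y\<^sup>2))) * indicator {t..} (x\<^sup>2 + y\<^sup>2) * indicator {0..} y \<partial>lborel)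
                 * indicator {0..} x = (\<integral>\<^sup>+s. k x s \<partial>lborel)" if "x \<noteq> 0" for x
  proof (cases "x > 0")
    case True
    have "(\<integral>\<^sup>+y. ennreal (exp (- (x\<^sup>2 + y\<^sup>2))) * indicator {t..} (x\<^sup>2 + y\<^sup>2) * indicator {0..} y \<partial>lborel)
            = \<bar>x\<bar> * (\<integral>\<^sup>+s. ennreal (exp (- (x\<^sup>2 + (0 + x * s)\<^sup>2))) * indicator {t..} (x\<^sup>2 + (0 + x * s)\<^sup>2)
                           * indicator {0..} (0 + x * s) \<partial>lborel)"
      by (rule nn_integral_real_affine) (use True in auto)
    also have "\<dots> = (\<integral>\<^sup>+s. k x s \<partial>lborel)"
      using True unfolding k_def
      by (subst nn_integral_cmult[symmetric])
         (auto intro!: nn_integral_cong simp: ennreal_mult' power_mult_distrib algebra_simps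
                 zero_le_mult_iff split: split_indicator)
    finally show ?thesis
      using True by simp
  next
    case False
    then show ?thesis
      using that by (simp add: k_def)
  qed
  have inner: "(\<integral>\<^sup>+x. k x s \<partial>lborel) = ennreal (exp (- t) / (2 * (1 + s\<^sup>2))) * indicator {0..} s" for s
  proof -
    define c where "c = 1 + s\<^sup>2"
    define a where "a = sqrt (t / c)"
    have c: "0 < c"
      unfolding c_def by (simp add: add_pos_nonneg)
    then have a: "0 \<le> a" "c * a\<^sup>2 = t"
      using t by (simp_all add: a_def)
    have "a \<le> x \<longleftrightarrow> 0 \<le> x \<and> sqrt (t / c) \<le> sqrt (x\<^sup>2)" for x
      using a(1) by (auto simp: a_def[symmetric])
    then have "a \<le> x \<longleftrightarrow> 0 \<le> x \<and> t / c \<le> x\<^sup>2" for x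
      by (simp only: real_sqrt_le_iff)
    then have "0 \<le> x \<and> t \<le> x\<^sup>2 * c \<longleftrightarrow> a \<le> x" for x
      using c by (simp add: divide_le_eq)
    then have "k x s = ennreal (x * exp (- (c * x\<^sup>2))) * indicator {a..} x * indicator {0..} s" for x
      unfolding k_def c_def[symmetric] by (auto simp: mult.commute split: split_indicator)
    then have "(\<integral>\<^sup>+x. k x s \<partial>lborel)
                 = (\<integral>\<^sup>+x. ennreal (x * exp (- (c * x\<^sup>2))) * indicator {a..} x \<partial>lborel) * indicator {0..} s"
      by (simp add: nn_integral_multc)
    then show ?thesis
      using nn_integral_x_exp_neg_sq_atLeast[OF c a(1)] a(2) by (simp add: c_def)
  qed
  have "(\<integral>\<^sup>+x. (\<integral>\<^sup>+y. ennreal (exp (- (x\<^sup>2 + y\<^sup>2))) * indicator {t..} (x\<^sup>2 + y\<^sup>2)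
                  * indicator {0..} y \<partial>lborel) * indicator {0..} x \<partial>lborel)
          = (\<integral>\<^sup>+x. \<integral>\<^sup>+s. k x s \<partial>lborel \<partial>lborel)"
    by (intro nn_integral_cong_AE, use AE_lborel_singleton[of 0] in eventually_elim) (use subst in auto)
  also have "\<dots> = (\<integral>\<^sup>+s. \<integral>\<^sup>+x. k x s \<partial>lborel \<partial>lborel)"
    by (rule lborel_pair.Fubini'[symmetric]) simp
  also have "\<dots> = (\<integral>\<^sup>+s. ennreal (exp (- t) / (2 * (1 + s\<^sup>2))) * indicator {0..} s \<partial>lborel)"
    by (simp add: inner)
  also have "\<dots> = ennreal (exp (- t) * arctan 0 / 2 + (exp (- t) * (pi / 2) / 2 - exp (- t) * arctan 0 / 2))"
  proof (subst nn_integral_FTC_atLeast)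
    show "((\<lambda>a. exp (- t) * arctan a / 2) \<longlongrightarrow> exp (- t) * (pi / 2) / 2) at_top"
      by (intro tendsto_intros) (simp_all add: tendsto_arctan_at_top)
  qed (auto intro!: derivative_eq_intros simp: add_nonneg_eq_0_iff field_simps power2_eq_square)
  finally show ?thesis
    by simp
qed

lemma emeasure_std_cgauss_tail:
  fixes t :: real
  assumes t: "0 \<le> t"
  shows "emeasure std_cgauss {z. t \<le> (cmod z)\<^sup>2} = ennreal (exp (- t))"
proof -
  define h where "h x y = ennreal (exp (- (x\<^sup>2 + y\<^sup>2))) * indicator {t..} (x\<^sup>2 + y\<^sup>2)" for x y :: real
  have [measurable]: "case_prod h \<in> borel_measurable (lborel \<Otimes>\<^sub>M lborel)"
    unfolding h_def by measurable
  have "emeasure std_cgauss {z. t \<le> (cmod z)\<^sup>2}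
          = (\<integral>\<^sup>+z. ennreal (exp (- ((cmod z)\<^sup>2)) / pi) * indicator {z. t \<le> (cmod z)\<^sup>2} z \<partial>lborel)"
    unfolding std_cgauss_def by (subst emeasure_density) auto
  also have "\<dots> = (\<integral>\<^sup>+x. \<integral>\<^sup>+y. ennreal (1 / pi) * h x y \<partial>lborel \<partial>lborel)"
    by (subst nn_integral_lborel_complex)
       (auto simp: cmod_def h_def ennreal_mult'[symmetric] split: split_indicator intro!: nn_integral_cong)
  also have "\<dots> = ennreal (1 / pi) * (\<integral>\<^sup>+x. \<integral>\<^sup>+y. h x y \<partial>lborel \<partial>lborel)"
    by (simp add: nn_integral_cmult)
  also have "(\<integral>\<^sup>+x. \<integral>\<^sup>+y. h x y \<partial>lborel \<partial>lborel)
               = (\<integral>\<^sup>+x. 2 * (\<integral>\<^sup>+y. h x y * indicator {0..} y \<partial>lborel) \<partial>lborel)"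
    by (intro nn_integral_cong nn_integral_lborel_even) (auto simp: h_def)
  also have "\<dots> = 2 * (\<integral>\<^sup>+x. (\<integral>\<^sup>+y. h x y * indicator {0..} y \<partial>lborel) \<partial>lborel)"
    by (rule nn_integral_cmult) simp
  also have "(\<integral>\<^sup>+x. (\<integral>\<^sup>+y. h x y * indicator {0..} y \<partial>lborel) \<partial>lborel)
               = 2 * (\<integral>\<^sup>+x. (\<integral>\<^sup>+y. h x y * indicator {0..} y \<partial>lborel) * indicator {0..} x \<partial>lborel)"
    by (rule nn_integral_lborel_even) (auto simp: h_def)
  also have "(\<integral>\<^sup>+x. (\<integral>\<^sup>+y. h x y * indicator {0..} y \<partial>lborel) * indicator {0..} x \<partial>lborel)
               = ennreal (exp (- t) * pi / 4)"
    unfolding h_def by (rule nn_integral_gaussian_quadrant_tail[OF t])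
  finally show ?thesis
    by (simp add: ennreal_mult'[symmetric] ennreal_mult[symmetric] ennreal_numeral[symmetric]
             del: ennreal_numeral)
qed

lemma prob_space_std_cgauss: "prob_space std_cgauss"
proof
  have "space std_cgauss = {z. 0 \<le> (cmod z)\<^sup>2}"
    by (simp add: std_cgauss_def)
  then show "emeasure std_cgauss (space std_cgauss) = 1"
    using emeasure_std_cgauss_tail[of 0] by simp
qed

lemma emeasure_std_cgauss_annulus:
  fixes a b :: real
  assumes "0 \<le> a" "a \<le> b"
  shows "emeasure std_cgauss {z. a \<le> (cmod z)\<^sup>2 \<and> (cmod z)\<^sup>2 < b} = ennreal (exp (- a) - exp (- b))"
proof -
  interpret prob_space std_cgauss
    by (rule prob_space_std_cgauss)
  have [simp]: "{z. r \<le> (cmod z)\<^sup>2} \<in> sets std_cgauss" for r :: real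
    by (simp add: std_cgauss_def)
  have "{z. a \<le> (cmod z)\<^sup>2 \<and> (cmod z)\<^sup>2 < b} = {z. a \<le> (cmod z)\<^sup>2} - {z. b \<le> (cmod z)\<^sup>2}"
    by auto
  also have "emeasure std_cgauss \<dots>
               = emeasure std_cgauss {z. a \<le> (cmod z)\<^sup>2} - emeasure std_cgauss {z. b \<le> (cmod z)\<^sup>2}"
    using assms by (intro emeasure_Diff) auto
  also have "\<dots> = ennreal (exp (- a) - exp (- b))"
    using assms by (simp add: emeasure_std_cgauss_tail ennreal_minus)
  finally show ?thesis .
qed

section \<open>The modes of \<open>P\<close> and the measure \<open>mu0\<close>\<close>

lemma lam_pos: "0 < lam k"
  unfolding lam_def by (simp add: add_nonneg_pos)

lemma Pmodes_subset: "Pmodes Le \<subseteq> {- \<lfloor>sqrt Le\<rfloor> .. \<lfloor>sqrt Le\<rfloor>}"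
proof
  fix k
  assume "k \<in> Pmodes Le"
  then have "((2 * pi * real_of_int k)\<^sup>2 + 1) / 2 \<le> Le"
    by (simp add: Pmodes_def lam_def)
  moreover have "(2::real)\<^sup>2 \<le> pi\<^sup>2"
    using pi_ge_two by (intro power_mono) auto
  then have "1 * (real_of_int k)\<^sup>2 \<le> (2 * pi\<^sup>2) * (real_of_int k)\<^sup>2"
    by (intro mult_right_mono) auto
  ultimately have "(real_of_int k)\<^sup>2 \<le> Le"
    by (simp add: power_mult_distrib field_simps)
  then have "\<bar>k\<bar> \<le> \<lfloor>sqrt Le\<rfloor>"
    by (simp add: real_le_rsqrt le_floor_iff)
  then show "k \<in> {- \<lfloor>sqrt Le\<rfloor> .. \<lfloor>sqrt Le\<rfloor>}"
    by auto
qed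

lemma finite_Pmodes [simp]: "finite (Pmodes Le)"
  using Pmodes_subset by (rule finite_subset) simp

lemma card_Pmodes_le:
  assumes "0 \<le> Le"
  shows "real (card (Pmodes Le)) \<le> 2 * sqrt Le + 1"
proof -
  have "card (Pmodes Le) \<le> card {- \<lfloor>sqrt Le\<rfloor> .. \<lfloor>sqrt Le\<rfloor>}"
    by (intro card_mono Pmodes_subset) simp
  also have "\<dots> = nat (2 * \<lfloor>sqrt Le\<rfloor> + 1)"
    by simp
  finally have "real (card (Pmodes Le)) \<le> real (nat (2 * \<lfloor>sqrt Le\<rfloor> + 1))"
    by (rule of_nat_mono)
  also have "\<dots> = 2 * real_of_int \<lfloor>sqrt Le\<rfloor> + 1"
    using assms by simp
  also have "\<dots> \<le> 2 * sqrt Le + 1"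
    by simp
  finally show ?thesis .
qed

lemma Pmodes_empty:
  assumes "Le < 0"
  shows "Pmodes Le = {}"
proof -
  have "\<not> lam k \<le> Le" for k
    using lam_pos[of k] assms by linarith
  then show ?thesis
    by (simp add: Pmodes_def)
qed

lemma product_prob_space_std_cgauss: "product_prob_space (\<lambda>_::int. std_cgauss)"
  by (simp add: product_prob_space_def product_prob_space_axioms_def product_sigma_finite_def
      prob_space_std_cgauss prob_space_imp_sigma_finite)

lemma measurable_mu0_scaling:
  "(\<lambda>g k. g k / complex_of_real (sqrt (lam k)))
     \<in> PiM UNIV (\<lambda>_::int. std_cgauss) \<rightarrow>\<^sub>M PiM UNIV (\<lambda>_. borel)"
  by (rule measurable_PiM_single')
     (auto simp: std_cgauss_def space_PiM intro!: measurable_compose[OF measurable_component_singleton])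

lemma prob_space_mu0: "prob_space mu0"
proof -
  interpret product_prob_space "\<lambda>_. std_cgauss" "UNIV :: int set"
    by (rule product_prob_space_std_cgauss)
  show ?thesis
    unfolding mu0_def by (rule prob_space_distr[OF measurable_mu0_scaling])
qed

lemma space_mu0 [simp]: "space mu0 = UNIV"
  by (simp add: mu0_def space_PiM)

lemma sets_mu0 [measurable_cong]: "sets mu0 = sets (PiM UNIV (\<lambda>_::int. (borel :: complex measure)))"
  by (simp add: mu0_def)

lemma borel_measurable_normP_sq [measurable]: "normP_sq Le \<in> borel_measurable mu0"
  unfolding normP_sq_def[abs_def] by measurable

section \<open>Coupling of \<open>mu0\<close> with the Gibbs state\<close>

definition occ_floor :: "real \<Rightarrow> real \<Rightarrow> (int \<Rightarrow> complex) \<Rightarrow> int \<Rightarrow> nat" where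
  "occ_floor tau Le u = (\<lambda>k. if k \<in> Pmodes Le then nat \<lfloor>tau * (cmod (u k))\<^sup>2\<rfloor> else 0)"

(* The Gibbs probability exp (- H_eig n) / Z of the configuration n; the partition function Z is a
   product of geometric series, one per mode. *)
definition gibbs_prob :: "real \<Rightarrow> real \<Rightarrow> (int \<Rightarrow> nat) \<Rightarrow> real" where
  "gibbs_prob tau Le n = (\<Prod>k\<in>Pmodes Le. 1 - exp (- (lam k / tau))) * exp (- H_eig tau Le n)"

lemma gibbs_prob_eq_prod:
  "gibbs_prob tau Le n
     = (\<Prod>k\<in>Pmodes Le. exp (- (real (n k) * lam k / tau)) - exp (- ((real (n k) + 1) * lam k / tau)))"
proof -
  have "exp (- H_eig tau Le n) = (\<Prod>k\<in>Pmodes Le. exp (- (real (n k) * lam k / tau)))"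
    unfolding H_eig_def by (simp add: exp_sum[symmetric] sum_divide_distrib sum_negf mult.commute)
  moreover have "exp (- (real (n k) * lam k / tau)) - exp (- ((real (n k) + 1) * lam k / tau))
                   = (1 - exp (- (lam k / tau))) * exp (- (real (n k) * lam k / tau))" for k
    by (simp add: algebra_simps add_divide_distrib exp_add[symmetric] exp_diff diff_divide_distrib)
  ultimately show ?thesis
    by (simp add: gibbs_prob_def prod.distrib)
qed

lemma prod_one_minus_exp_lam_pos: "0 < tau \<Longrightarrow> 0 < (\<Prod>k\<in>Pmodes Le. 1 - exp (- (lam k / tau)))"
  using lam_pos by (intro prod_pos) simp

lemma gibbs_prob_nonneg: "0 < tau \<Longrightarrow> 0 \<le> gibbs_prob tau Le n"
  unfolding gibbs_prob_def using prod_one_minus_exp_lam_pos by (simp add: less_imp_le)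

lemma countable_occ: "countable (occ Le)"
proof -
  have "occ Le = (\<lambda>f k. if k \<in> Pmodes Le then f k else 0) ` Pi\<^sub>E (Pmodes Le) (\<lambda>_. UNIV :: nat set)"
  proof (intro set_eqI iffI)
    fix n
    assume "n \<in> occ Le"
    then have "n = (\<lambda>k. if k \<in> Pmodes Le then restrict n (Pmodes Le) k else 0)"
      by (auto simp: occ_def)
    then show "n \<in> (\<lambda>f k. if k \<in> Pmodes Le then f k else 0) ` Pi\<^sub>E (Pmodes Le) (\<lambda>_. UNIV)"
      by (intro image_eqI[where x = "restrict n (Pmodes Le)"]) auto
  qed (auto simp: occ_def)
  then show ?thesis
    by (auto intro!: countable_PiE)
qed

lemma occ_floor_in_occ: "occ_floor tau Le u \<in> occ Le"
  by (simp add: occ_floor_def occ_def)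

lemma occ_floor_eq_iff:
  "n \<in> occ Le \<Longrightarrow> occ_floor tau Le u = n \<longleftrightarrow> (\<forall>k\<in>Pmodes Le. nat \<lfloor>tau * (cmod (u k))\<^sup>2\<rfloor> = n k)"
  by (auto simp: occ_floor_def occ_def fun_eq_iff)

lemma measurable_occ_floor [measurable]: "occ_floor tau Le \<in> mu0 \<rightarrow>\<^sub>M count_space (occ Le)"
proof (subst measurable_count_space_eq_countable[OF countable_occ], intro conjI ballI)
  show "occ_floor tau Le \<in> space mu0 \<rightarrow> occ Le"
    using occ_floor_in_occ by auto
next
  fix n
  assume "n \<in> occ Le"
  then have "occ_floor tau Le -` {n} \<inter> space mu0
               = {u \<in> space mu0. \<forall>k\<in>Pmodes Le. nat \<lfloor>tau * (cmod (u k))\<^sup>2\<rfloor> = n k}"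
    using occ_floor_eq_iff[of n Le tau] by auto
  also have "\<dots> \<in> sets mu0"
    by measurable
  finally show "occ_floor tau Le -` {n} \<inter> space mu0 \<in> sets mu0" .
qed

lemma emeasure_mu0_occ_floor_eq:
  assumes tau: "0 < tau" and n: "n \<in> occ Le"
  shows "emeasure mu0 {u. occ_floor tau Le u = n} = ennreal (gibbs_prob tau Le n)"
proof -
  interpret product_prob_space "\<lambda>_. std_cgauss" "UNIV :: int set"
    by (rule product_prob_space_std_cgauss)
  define a where "a k = real (n k) * lam k / tau" for k
  define b where "b k = (real (n k) + 1) * lam k / tau" for k
  define B where "B k = {z. a k \<le> (cmod z)\<^sup>2 \<and> (cmod z)\<^sup>2 < b k}" for k
  have floor_eq_iff: "nat \<lfloor>tau * (cmod (z / complex_of_real (sqrt (lam k))))\<^sup>2\<rfloor> = n k \<longleftrightarrow> z \<in> B k"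
    for z k
    using tau lam_pos[of k]
    by (simp add: nat_eq_iff floor_eq_iff norm_divide power_divide B_def a_def b_def field_simps)
  have "{u. occ_floor tau Le u = n} \<in> sets (PiM UNIV (\<lambda>_::int. borel :: complex measure))"
    using measurable_sets[OF measurable_occ_floor[of tau Le], of "{n}"] n by (simp add: vimage_def sets_mu0)
  then have "emeasure mu0 {u. occ_floor tau Le u = n}
          = emeasure (PiM UNIV (\<lambda>_. std_cgauss))
              ((\<lambda>g k. g k / complex_of_real (sqrt (lam k))) -` {u. occ_floor tau Le u = n}
                 \<inter> space (PiM UNIV (\<lambda>_. std_cgauss)))"
    unfolding mu0_def by (intro emeasure_distr measurable_mu0_scaling)
  also have "(\<lambda>g k. g k / complex_of_real (sqrt (lam k))) -` {u. occ_floor tau Le u = n}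
               \<inter> space (PiM UNIV (\<lambda>_. std_cgauss))
               = prod_emb UNIV (\<lambda>_. std_cgauss) (Pmodes Le) (Pi\<^sub>E (Pmodes Le) B)"
    using n by (auto simp: occ_floor_eq_iff floor_eq_iff prod_emb_def space_PiM)
  also have "emeasure (PiM UNIV (\<lambda>_. std_cgauss)) \<dots> = (\<Prod>k\<in>Pmodes Le. emeasure std_cgauss (B k))"
    by (rule emeasure_PiM_emb) (auto simp: B_def std_cgauss_def)
  also have "\<dots> = (\<Prod>k\<in>Pmodes Le. ennreal (exp (- a k) - exp (- b k)))"
    unfolding B_def using tau lam_pos
    by (intro prod.cong refl emeasure_std_cgauss_annulus) (auto simp: a_def b_def field_simps less_imp_le)
  also have "\<dots> = ennreal (gibbs_prob tau Le n)"
    using tau lam_pos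
    by (subst prod_ennreal) (auto simp: gibbs_prob_eq_prod a_def b_def field_simps less_imp_le)
  finally show ?thesis .
qed

lemma distr_mu0_occ_floor:
  assumes tau: "0 < tau"
  shows "distr mu0 (count_space (occ Le)) (occ_floor tau Le)
           = density (count_space (occ Le)) (\<lambda>n. ennreal (gibbs_prob tau Le n))"
proof (rule measure_eqI_countable[OF _ _ countable_occ])
  fix n
  assume n: "n \<in> occ Le"
  have "emeasure (distr mu0 (count_space (occ Le)) (occ_floor tau Le)) {n}
          = emeasure mu0 {u. occ_floor tau Le u = n}"
    using n by (subst emeasure_distr) (auto simp: vimage_def)
  then show "emeasure (distr mu0 (count_space (occ Le)) (occ_floor tau Le)) {n}
               = emeasure (density (count_space (occ Le)) (\<lambda>n. ennreal (gibbs_prob tau Le n))) {n}"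
    using n by (simp add: emeasure_mu0_occ_floor_eq[OF tau] emeasure_density)
qed auto

lemma integral_mu0_occ_floor:
  fixes G :: "(int \<Rightarrow> nat) \<Rightarrow> real"
  assumes tau: "0 < tau" and G: "\<And>n. \<bar>G n\<bar> \<le> B"
  shows "(\<integral>u. G (occ_floor tau Le u) \<partial>mu0) = (\<Sum>\<^sub>\<infinity>n\<in>occ Le. gibbs_prob tau Le n * G n)"
proof -
  interpret prob_space "distr mu0 (count_space (occ Le)) (occ_floor tau Le)"
    by (intro prob_space.prob_space_distr prob_space_mu0) simp
  have "integrable (distr mu0 (count_space (occ Le)) (occ_floor tau Le)) G"
    using G by (intro integrable_const_bound[where B = B]) auto
  then have "integrable (count_space (occ Le)) (\<lambda>n. gibbs_prob tau Le n * G n)"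
    using gibbs_prob_nonneg[OF tau] by (simp add: distr_mu0_occ_floor[OF tau] integrable_density)
  note summable = this[folded Infinite_Set_Sum.abs_summable_on_def]
  have "(\<integral>u. G (occ_floor tau Le u) \<partial>mu0) = (\<integral>n. G n \<partial>distr mu0 (count_space (occ Le)) (occ_floor tau Le))"
    by (simp add: integral_distr)
  also have "\<dots> = (\<integral>n. gibbs_prob tau Le n * G n \<partial>count_space (occ Le))"
    using gibbs_prob_nonneg[OF tau] by (simp add: distr_mu0_occ_floor[OF tau] integral_density)
  also have "\<dots> = (\<Sum>\<^sub>\<infinity>n\<in>occ Le. gibbs_prob tau Le n * G n)"
    using infsetsum_infsum[OF summable] by (simp add: infsetsum_def)
  finally show ?thesis .
qed

lemma fock_gibbs_trace_eq_integral:
  assumes tau: "0 < tau" and g: "\<And>x. 0 \<le> x \<Longrightarrow> \<bar>g x\<bar> \<le> B"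
  shows "fock_gibbs_trace tau Le g = (\<integral>u. g (N_eig Le (occ_floor tau Le u)) \<partial>mu0)"
proof -
  interpret prob_space mu0
    by (rule prob_space_mu0)
  define c where "c = (\<Prod>k\<in>Pmodes Le. 1 - exp (- (lam k / tau)))"
  have c: "0 < c"
    unfolding c_def by (rule prod_one_minus_exp_lam_pos[OF tau])
  have weight: "exp (- H_eig tau Le n) = inverse c * gibbs_prob tau Le n" for n
    using c by (simp add: gibbs_prob_def c_def[symmetric])
  have N_nonneg: "0 \<le> N_eig Le n" for n
    unfolding N_eig_def by (simp add: sum_nonneg)
  have "(\<Sum>\<^sub>\<infinity>n\<in>occ Le. gibbs_prob tau Le n) = 1"
    using integral_mu0_occ_floor[OF tau, of "\<lambda>_. 1" 1 Le] prob_space by simp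
  then have "(\<Sum>\<^sub>\<infinity>n\<in>occ Le. exp (- H_eig tau Le n)) = inverse c"
    unfolding weight infsum_cmult_right' by simp
  moreover have "(\<Sum>\<^sub>\<infinity>n\<in>occ Le. exp (- H_eig tau Le n) * g (N_eig Le n))
                   = inverse c * (\<Sum>\<^sub>\<infinity>n\<in>occ Le. gibbs_prob tau Le n * g (N_eig Le n))"
    unfolding weight mult.assoc infsum_cmult_right' ..
  ultimately have "fock_gibbs_trace tau Le g = (\<Sum>\<^sub>\<infinity>n\<in>occ Le. gibbs_prob tau Le n * g (N_eig Le n))"
    using c by (simp add: fock_gibbs_trace_def)
  also have "\<dots> = (\<integral>u. g (N_eig Le (occ_floor tau Le u)) \<partial>mu0)"
    by (rule integral_mu0_occ_floor[OF tau, where B = B, symmetric]) (simp add: g N_nonneg)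
  finally show ?thesis .
qed

section \<open>The cutoff estimate\<close>

lemma abs_sub_nat_floor_mult_div_le:
  fixes tau x :: real
  assumes "0 < tau" "0 \<le> x"
  shows "\<bar>x - real (nat \<lfloor>tau * x\<rfloor>) / tau\<bar> \<le> 1 / tau"
proof -
  have "real (nat \<lfloor>tau * x\<rfloor>) = of_int \<lfloor>tau * x\<rfloor>"
    using assms by simp
  then have "\<bar>tau * x - real (nat \<lfloor>tau * x\<rfloor>)\<bar> \<le> 1"
    by linarith
  moreover have "x - real (nat \<lfloor>tau * x\<rfloor>) / tau = (tau * x - real (nat \<lfloor>tau * x\<rfloor>)) / tau"
    using assms by (simp add: field_simps)
  ultimately show ?thesis
    using assms by (simp add: divide_right_mono)
qed

lemma abs_normP_sq_sub_N_eig_occ_floor_le: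
  assumes tau: "0 < tau"
  shows "\<bar>normP_sq Le u - N_eig Le (occ_floor tau Le u) / tau\<bar> \<le> real (card (Pmodes Le)) / tau"
proof -
  have "\<bar>normP_sq Le u - N_eig Le (occ_floor tau Le u) / tau\<bar>
          = \<bar>\<Sum>k\<in>Pmodes Le. (cmod (u k))\<^sup>2 - real (nat \<lfloor>tau * (cmod (u k))\<^sup>2\<rfloor>) / tau\<bar>"
    by (simp add: normP_sq_def N_eig_def occ_floor_def sum_subtractf sum_divide_distrib)
  also have "\<dots> \<le> (\<Sum>k\<in>Pmodes Le. 1 / tau)"
    using tau by (intro order_trans[OF sum_abs] sum_mono abs_sub_nat_floor_mult_div_le) auto
  finally show ?thesis
    by simp
qed

lemma abs_fock_gibbs_trace_sub_integral_le:
  assumes tau: "0 < tau" and lip: "L-lipschitz_on {0..} f" and bound: "\<And>x. 0 \<le> x \<Longrightarrow> \<bar>f x\<bar> \<le> B"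
  shows "\<bar>fock_gibbs_trace tau Le (\<lambda>x. f (x / tau)) - (\<integral>u. f (normP_sq Le u) \<partial>mu0)\<bar>
           \<le> L * real (card (Pmodes Le)) / tau"
proof -
  interpret prob_space mu0
    by (rule prob_space_mu0)
  let ?F = "\<lambda>u. f (N_eig Le (occ_floor tau Le u) / tau)"
  have N_nonneg: "0 \<le> N_eig Le n" for n
    unfolding N_eig_def by (simp add: sum_nonneg)
  have normP_nonneg: "0 \<le> normP_sq Le u" for u
    unfolding normP_sq_def by (simp add: sum_nonneg)
  have "continuous_on UNIV (\<lambda>x. f (max 0 x))"
    by (rule continuous_on_compose2[OF lipschitz_on_continuous_on[OF lip]]) (auto intro!: continuous_intros)
  then have "(\<lambda>u. f (max 0 (normP_sq Le u))) \<in> borel_measurable mu0"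
    by (intro measurable_compose[OF borel_measurable_normP_sq] borel_measurable_continuous_onI)
  then have integrable_normP: "integrable mu0 (\<lambda>u. f (normP_sq Le u))"
    using bound normP_nonneg by (intro integrable_const_bound[where B = B]) (auto simp: max_absorb2)
  moreover have "?F \<in> borel_measurable mu0"
    by (rule measurable_compose[OF measurable_occ_floor]) simp
  then have integrable_F: "integrable mu0 ?F"
    using bound N_nonneg tau by (intro integrable_const_bound[where B = B]) auto
  moreover have "fock_gibbs_trace tau Le (\<lambda>x. f (x / tau)) = integral\<^sup>L mu0 ?F"
    using bound tau by (intro fock_gibbs_trace_eq_integral[where B = B]) auto
  moreover have pointwise: "\<bar>?F u - f (normP_sq Le u)\<bar> \<le> L * real (card (Pmodes Le)) / tau" for u
  proof -
    have "\<bar>?F u - f (normP_sq Le u)\<bar> \<le> L * \<bar>N_eig Le (occ_floor tau Le u) / tau - normP_sq Le u\<bar>"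
      using lipschitz_onD[OF lip] N_nonneg normP_nonneg tau by (simp add: dist_real_def)
    also have "\<dots> \<le> L * (real (card (Pmodes Le)) / tau)"
      using abs_normP_sq_sub_N_eig_occ_floor_le[OF tau] lipschitz_on_nonneg[OF lip]
      by (intro mult_left_mono) (auto simp: abs_minus_commute)
    finally show ?thesis
      by simp
  qed
  ultimately have "\<bar>fock_gibbs_trace tau Le (\<lambda>x. f (x / tau)) - (\<integral>u. f (normP_sq Le u) \<partial>mu0)\<bar>
                    = \<bar>\<integral>u. ?F u - f (normP_sq Le u) \<partial>mu0\<bar>"
    by simp
  also have "\<dots> \<le> (\<integral>u. \<bar>?F u - f (normP_sq Le u)\<bar> \<partial>mu0)"
    by (rule integral_abs_bound)
  also have "\<dots> \<le> L * real (card (Pmodes Le)) / tau"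
    by (intro integral_le_const integrable_abs Bochner_Integration.integrable_diff
              integrable_F integrable_normP AE_I2 pointwise)
  finally show ?thesis .
qed

lemma lipschitz_on_cutoff:
  assumes "is_cutoff KK eta Cf D"
  shows "(Cf 1 * eta powr (-1))-lipschitz_on {0..} (D 0)"
proof (rule lipschitz_onI)
  have deriv: "(D 0 has_real_derivative D 1 x) (at x within {0..})"
    and bound: "norm (D 1 x) \<le> Cf 1 * eta powr (-1)" if "x \<in> {0..}" for x
    using assms that unfolding is_cutoff_def by (auto dest: spec[of _ 0] spec[of _ 1])
  show "dist (D 0 x) (D 0 y) \<le> Cf 1 * eta powr (-1) * dist x y" if "x \<in> {0..}" "y \<in> {0..}" for x y
    using field_differentiable_bound[OF convex_real_interval(1) deriv bound that]
    by (simp add: dist_norm)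
  show "0 \<le> Cf 1 * eta powr (-1)"
    using order_trans[OF norm_ge_zero bound[of 0]] by simp
qed

lemma card_Pmodes_div_le:
  assumes tau: "1 \<le> tau" and eta: "tau powr (-1/64) \<le> eta" and Le: "Le powr (1/8) \<le> tau powr (1/32)"
  shows "real (card (Pmodes Le)) / (eta * tau) \<le> 3 * tau powr (-1/4)"
proof -
  have "0 < tau powr (-1/64)"
    using tau by simp
  then have eta_pos: "0 < eta"
    using eta by linarith
  have "1 / eta \<le> 1 / tau powr (-1/64)"
    using eta eta_pos \<open>0 < tau powr (-1/64)\<close> by (intro divide_left_mono) (auto simp: zero_less_mult_iff)
  then have inv_eta: "1 / eta \<le> tau powr (1/64)"
    using tau by (simp add: powr_minus_divide)
  have card: "real (card (Pmodes Le)) \<le> 3 * tau powr (1/8)"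
  proof (cases "0 \<le> Le")
    case True
    have "sqrt Le = (Le powr (1/8)) powr 4"
      using True by (simp add: powr_powr powr_half_sqrt[symmetric])
    also have "\<dots> \<le> (tau powr (1/32)) powr 4"
      by (intro powr_mono2 Le) auto
    finally have "sqrt Le \<le> tau powr (1/8)"
      by (simp add: powr_powr)
    then show ?thesis
      using card_Pmodes_le[OF True] ge_one_powr_ge_zero[of tau "1/8"] tau by linarith
  next
    case False
    then show ?thesis
      using tau by (simp add: Pmodes_empty)
  qed
  have "real (card (Pmodes Le)) / (eta * tau) = (1 / eta) * real (card (Pmodes Le)) * tau powr (-1)"
    using tau by (simp add: powr_minus_divide)
  also have "\<dots> \<le> tau powr (1/64) * (3 * tau powr (1/8)) * tau powr (-1)"
    using inv_eta card eta_pos tau by (intro mult_right_mono mult_mono) auto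
  also have "\<dots> = 3 * (tau powr (1/64) * tau powr (1/8) * tau powr (-1))"
    by (simp only: mult_ac)
  also have "tau powr (1/64) * tau powr (1/8) * tau powr (-1) = tau powr (1/64 + 1/8 + -1)"
    by (simp only: powr_add)
  also have "3 * \<dots> \<le> 3 * tau powr (-1/4)"
    using tau by (intro mult_left_mono powr_mono) auto
  finally show ?thesis .
qed

theorem lemmaA2:
  fixes KK :: real and Cf :: "nat \<Rightarrow> real"
  assumes "KK > 0"
  shows "\<exists>C>0. \<exists>tau0. \<forall>tau Le eta D.
           tau \<ge> tau0 \<longrightarrow>
           tau powr (-1/64) \<le> eta \<longrightarrow> eta < KK^2 / 2 \<longrightarrow>
           1 / eta \<le> Le powr (1/8) \<longrightarrow> Le powr (1/8) \<le> tau powr (1/32) \<longrightarrow>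
           is_cutoff KK eta Cf D \<longrightarrow>
           \<bar>fock_gibbs_trace tau Le (\<lambda>x. D 0 (x / tau))
              - (\<integral>u. D 0 (normP_sq Le u) \<partial>mu0)\<bar> \<le> C * tau powr (-1/4)"
proof (rule exI[of _ "3 * \<bar>Cf 1\<bar> + 1"], intro conjI exI[of _ 1] allI impI)
  fix tau Le eta :: real and D :: "nat \<Rightarrow> real \<Rightarrow> real"
  assume tau: "1 \<le> tau" and eta: "tau powr (-1/64) \<le> eta" and "eta < KK^2 / 2"
    and "1 / eta \<le> Le powr (1/8)" and Le: "Le powr (1/8) \<le> tau powr (1/32)"
    and cutoff: "is_cutoff KK eta Cf D"
  \<comment> \<open>only the bound \<open>\<bar>D 1\<bar> \<le> Cf 1 / eta\<close> on the cutoff matters\<close>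
  have bounded: "\<bar>D 0 x\<bar> \<le> 1" if "0 \<le> x" for x
    using cutoff that unfolding is_cutoff_def by auto
  have "0 < tau powr (-1/64)"
    using tau by simp
  then have eta_pos: "0 < eta"
    using eta by linarith
  have "\<bar>fock_gibbs_trace tau Le (\<lambda>x. D 0 (x / tau)) - (\<integral>u. D 0 (normP_sq Le u) \<partial>mu0)\<bar>
          \<le> Cf 1 * eta powr (-1) * real (card (Pmodes Le)) / tau"
    using tau bounded by (intro abs_fock_gibbs_trace_sub_integral_le lipschitz_on_cutoff[OF cutoff]) auto
  also have "\<dots> = Cf 1 * (real (card (Pmodes Le)) / (eta * tau))"
    using eta_pos by (simp add: powr_minus_divide)
  also have "\<dots> \<le> \<bar>Cf 1\<bar> * (3 * tau powr (-1/4))"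
    using eta_pos tau by (intro mult_mono card_Pmodes_div_le[OF tau eta Le]) auto
  also have "\<dots> \<le> (3 * \<bar>Cf 1\<bar> + 1) * tau powr (-1/4)"
    by (simp add: algebra_simps)
  finally show "\<bar>fock_gibbs_trace tau Le (\<lambda>x. D 0 (x / tau)) - (\<integral>u. D 0 (normP_sq Le u) \<partial>mu0)\<bar>
                  \<le> (3 * \<bar>Cf 1\<bar> + 1) * tau powr (-1/4)" .
qed simp

end
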